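(* Let $I\subseteq R$ be a good ideal. Then there exist finitely many pairwise disjoint cones in $\mathbb N^n$ whose union is $\mathbb N^n$ such that for each of these cones $C$ and all $a,b\in C$ one has $I_a=I_b$.
   Context: Let $\mathbb K$ be a field, $R=\mathbb K[x_1,\dots,x_n]$, $\mathfrak m=\langle x_1,\dots,x_n\rangle$, $\mathbb N=\{0,1,2,\dots\}$. A monomial $x_1^{\alpha_1}\cdots x_n^{\alpha_n}$ is identified with the point $(\alpha_1,\dots,\alpha_n)\in\mathbb N^n$. For a monomial ideal $I$, $G(I)$ denotes its (unique) minimal monomial generating set. If $I$ is an $\mathfrak m$-primary monomial ideal, then for each $i$ there is a unique $d_i\ge1$ with $x_i^{d_i}\in G(I)$; write $\mu_i=x_i^{d_i}$. For $(a_1,\dots,a_n)\in\mathbb N^n$ the box associated to $I$ is $B_{a_1,\dots,a_n}=([a_1d_1,(a_1+1)d_1]\times\cdots\times[a_nd_n,(a_n+1)d_n])\cap\mathbb N^n$; a monomial belongs to a box if its exponent vector does. An $\mathfrak m$-primary monomial ideal $I$ is called good if for every integer $l\ge1$, every element of $G(I^l)$ belongs to some box $B_{a_1,\dots,a_n}$ with $a_1+\dots+a_n=l-1$. For a good ideal $I$ and $a=(a_1,\dots,a_n)\in\mathbb N^n$, with $l=a_1+\dots+a_n+1$, define $I_{a}=I_{a_1,\dots,a_n}=\left\langle \frac{m}{\mu_1^{a_1}\cdots\mu_n^{a_n}} : m\in B_{a_1,\dots,a_n}\cap G(I^l)\right\rangle$. For $v\in\mathbb N^n$ and $S\subseteq\{1,\dots,n\}$,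 the cone with vertex $v$ and set of fixed coordinates $S$ is $\{c\in\mathbb N^n : c_i=v_i \text{ for } i\in S,\ c_i\ge v_i \text{ for } i\notin S\}$; its dimension is $n-|S|$. *)

theory Defs
  imports Main
begin

text \<open>Monomials of R = K[x_i : i in 'n] are identified with exponent vectors
  'n => nat (the variables are indexed by a finite type 'n, so n = CARD('n)).
  A monomial ideal is identified with the set of exponent vectors of the
  monomials it contains; this set is closed upwards in the componentwise order.\<close>

type_synonym 'n expv = "'n \<Rightarrow> nat"

definition monomial_ideal :: "'n expv set \<Rightarrow> bool" where
  "monomial_ideal I \<longleftrightarrow> (\<forall>a\<in>I. \<forall>b. a \<le> b \<longrightarrow> b \<in> I)"

definition mgen :: "'n expv set \<Rightarrow> 'n expv set" where
  "mgen S = {b. \<exists>a\<in>S. a \<le> b}"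

definition mingens :: "'n expv set \<Rightarrow> 'n expv set" where
  "mingens I = {a\<in>I. \<forall>b\<in>I. b \<le> a \<longrightarrow> b = a}"

definition mprod :: "'n expv set \<Rightarrow> 'n expv set \<Rightarrow> 'n expv set" where
  "mprod I J = mgen {(\<lambda>i. a i + b i) | a b. a \<in> I \<and> b \<in> J}"

fun mpow :: "'n expv set \<Rightarrow> nat \<Rightarrow> 'n expv set" where
  "mpow I 0 = UNIV"
| "mpow I (Suc l) = mprod I (mpow I l)"

definition xpow :: "'n \<Rightarrow> nat \<Rightarrow> 'n expv" where
  "xpow i d = (\<lambda>j. if j = i then d else 0)"

definition m_primary :: "'n expv set \<Rightarrow> bool" where
  "m_primary I \<longleftrightarrow> monomial_ideal I \<and> I \<noteq> UNIV \<and> (\<forall>i. \<exists>d. xpow i d \<in> I)"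

definition dexp :: "'n expv set \<Rightarrow> 'n \<Rightarrow> nat" where
  "dexp I i = (THE d. xpow i d \<in> mingens I)"

definition box :: "'n expv set \<Rightarrow> 'n expv \<Rightarrow> 'n expv set" where
  "box I a = {c. \<forall>i. a i * dexp I i \<le> c i \<and> c i \<le> (a i + 1) * dexp I i}"

definition good_ideal :: "('n::finite) expv set \<Rightarrow> bool" where
  "good_ideal I \<longleftrightarrow> m_primary I \<and>
     (\<forall>l\<ge>1. \<forall>m\<in>mingens (mpow I l). \<exists>a. (\<Sum>i\<in>UNIV. a i) = l - 1 \<and> m \<in> box I a)"

text \<open>I_a, generated by m / (mu_1^{a_1} ... mu_n^{a_n}) for m in B_a \<inter> G(I^l), l = |a| + 1.\<close>
definition I_idx :: "('n::finite) expv set \<Rightarrow> 'n expv \<Rightarrow> 'n expv set" where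
  "I_idx I a = mgen {(\<lambda>i. m i - a i * dexp I i) | m.
       m \<in> box I a \<inter> mingens (mpow I ((\<Sum>i\<in>UNIV. a i) + 1))}"

definition cone :: "'n expv \<Rightarrow> 'n set \<Rightarrow> 'n expv set" where
  "cone v S = {c. (\<forall>i\<in>S. c i = v i) \<and> (\<forall>i. i \<notin> S \<longrightarrow> v i \<le> c i)}"

end

theory Submission
  imports Defs Complex_Main "HOL-Library.FuncSet" "HOL-Library.Function_Algebras"
begin

(* Write mu^a for mu_1^a_1 ... mu_n^a_n and |a| for a_1 + ... + a_n.  A generator of I_a is a
   monomial x^c with c <= (d_1, ..., d_n), and x^c is one iff x^c mu^a is a minimal generator of
   I^(|a|+1), i.e. iff x^c mu^a lies in I^(|a|+1) but no x^c mu^a / x_i does.  Since mu_k lies in I,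
   the set of indices a for which such a membership holds is closed under a |-> a + e_k, so it is a
   monomial ideal of the index space N^n.  Hence I_a is determined by the membership of a in
   finitely many monomial ideals.  By Dickson's lemma each of them is finitely generated, so
   membership only depends on (min(a_i, N))_i for a common bound N, and the fibres of this map are
   cones partitioning N^n. *)

lemma nat_seq_has_mono_subseq:
  fixes s :: "nat \<Rightarrow> nat"
  obtains h :: "nat \<Rightarrow> nat" where "strict_mono h" "mono (s \<circ> h)"
proof -
  obtain f where f: "strict_mono f" "monoseq (s \<circ> f)"
    using seq_monosub[of s] by (auto simp: o_def)
  show thesis
  proof (cases "mono (s \<circ> f)")
    case True
    with f(1) show thesis by (rule that)
  next
    case False
    then have dec: "m \<le> n \<Longrightarrow> s (f n) \<le> s (f m)" for m n
      using f(2) unfolding monoseq_def mono_def by auto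
    obtain n0 where n0: "\<And>n. s (f n0) \<le> s (f n)"
      using ex_has_least_nat[of "\<lambda>_. True" 0 "s \<circ> f"] by auto
    \<comment> \<open>a non-increasing sequence of naturals is constant from its minimum on\<close>
    have "mono (s \<circ> (\<lambda>k. f (k + n0)))"
      using dec[of n0] n0 by (intro monoI) (metis comp_apply le_add2 order_trans)
    moreover have "strict_mono (\<lambda>k. f (k + n0))"
      using f(1) by (simp add: strict_mono_def)
    ultimately show thesis by (rule that[rotated])
  qed
qed

lemma funs_seq_has_mono_subseq:
  fixes f :: "nat \<Rightarrow> 'n \<Rightarrow> nat"
  assumes "finite J"
  obtains h :: "nat \<Rightarrow> nat" where "strict_mono h" "\<forall>i\<in>J. mono (\<lambda>k. f (h k) i)"
  using assms
proof (induction J arbitrary: thesis rule: finite_induct)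
  case empty
  show ?case by (rule empty.prems[OF strict_mono_id]) simp
next
  case (insert j J)
  obtain h :: "nat \<Rightarrow> nat" where h: "strict_mono h" "\<forall>i\<in>J. mono (\<lambda>k. f (h k) i)"
    by (rule insert.IH)
  obtain g :: "nat \<Rightarrow> nat" where g: "strict_mono g" "mono ((\<lambda>k. f (h k) j) \<circ> g)"
    by (rule nat_seq_has_mono_subseq)
  have "\<forall>i\<in>insert j J. mono (\<lambda>k. f (h (g k)) i)"
    using g h strict_mono_mono[OF g(1)] by (auto simp: mono_def o_def)
  then show ?case by (rule insert.prems[OF strict_mono_o[OF h(1) g(1)], unfolded o_def])
qed

lemma dickson_lemma:
  fixes f :: "nat \<Rightarrow> 'n::finite \<Rightarrow> nat"
  obtains i j where "i < j" "f i \<le> f j"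
proof -
  obtain h :: "nat \<Rightarrow> nat" where "strict_mono h" "\<forall>i\<in>UNIV. mono (\<lambda>k. f (h k) i)"
    by (rule funs_seq_has_mono_subseq[OF finite_UNIV])
  then have "h 0 < h 1" "f (h 0) \<le> f (h 1)"
    by (auto simp: strict_mono_def le_fun_def mono_def)
  then show thesis by (rule that)
qed

lemma finite_mingens:
  fixes U :: "('n::finite) expv set"
  shows "finite (mingens U)"
proof (rule ccontr)
  assume "infinite (mingens U)"
  then obtain f :: "nat \<Rightarrow> 'n expv" where f: "inj f" "range f \<subseteq> mingens U"
    using infinite_countable_subset by blast
  obtain i j where "i < j" "f i \<le> f j" using dickson_lemma by blast
  moreover have "f i \<in> U" "f j \<in> mingens U" using f(2) by (auto simp: mingens_def)
  ultimately have "f i = f j" by (simp add: mingens_def)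
  then show False using f(1) \<open>i < j\<close> by (simp add: inj_eq)
qed

lemma mingens_below:
  fixes U :: "('n::finite) expv set"
  assumes "a \<in> U"
  obtains m where "m \<in> mingens U" "m \<le> a"
proof -
  obtain m where m: "m \<in> U" "m \<le> a"
    and least: "\<And>b. b \<in> U \<Longrightarrow> b \<le> a \<Longrightarrow> sum m UNIV \<le> sum b UNIV"
    using ex_has_least_nat[of "\<lambda>b. b \<in> U \<and> b \<le> a" a "\<lambda>b. sum b UNIV"] assms by blast
  have "b = m" if "b \<in> U" "b \<le> m" for b
  proof (rule ccontr)
    assume "b \<noteq> m"
    with \<open>b \<le> m\<close> have "sum b UNIV < sum m UNIV"
      by (intro sum_strict_mono_ex1) (auto simp: le_fun_def fun_eq_iff intro: le_neq_implies_less)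
    with least[OF \<open>b \<in> U\<close>] \<open>b \<le> m\<close> m(2) show False
      by (meson leD order_trans)
  qed
  with m show thesis by (intro that) (auto simp: mingens_def)
qed

definition trunc :: "nat \<Rightarrow> 'n expv \<Rightarrow> 'n expv" where
  "trunc N a = (\<lambda>i. min (a i) N)"

lemma trunc_le: "trunc N a \<le> a"
  by (simp add: trunc_def le_fun_def)

lemma trunc_mem_iff:
  fixes U :: "('n::finite) expv set"
  assumes "monomial_ideal U" and bound: "\<And>m i. m \<in> mingens U \<Longrightarrow> m i \<le> N"
  shows "trunc N a \<in> U \<longleftrightarrow> a \<in> U"
proof
  assume "trunc N a \<in> U"
  then show "a \<in> U" using assms(1) trunc_le unfolding monomial_ideal_def by blast
next
  assume "a \<in> U"
  then obtain m where m: "m \<in> mingens U" "m \<le> a" by (rule mingens_below)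
  then have "m \<le> trunc N a" using bound by (auto simp: trunc_def le_fun_def)
  with m(1) assms(1) show "trunc N a \<in> U" unfolding monomial_ideal_def mingens_def by blast
qed

lemma monomial_ideals_common_trunc:
  fixes F :: "('n::finite) expv set set"
  assumes "finite F" "\<And>U. U \<in> F \<Longrightarrow> monomial_ideal U"
  obtains N where "\<And>U a. U \<in> F \<Longrightarrow> trunc N a \<in> U \<longleftrightarrow> a \<in> U"
proof -
  let ?E = "\<Union>U\<in>F. (\<lambda>(m, i). m i) ` (mingens U \<times> UNIV)"
  have "finite ?E"
    by (intro finite_UN_I assms(1) finite_imageI finite_cartesian_product finite_mingens finite_UNIV)
  then obtain N where N: "\<And>x. x \<in> ?E \<Longrightarrow> x \<le> N"
    by (meson finite_nat_set_iff_bounded_le)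
  show thesis
  proof (rule that)
    fix U a assume "U \<in> F"
    then have "m i \<le> N" if "m \<in> mingens U" for m i
      using that by (intro N UN_I[OF \<open>U \<in> F\<close>] image_eqI[where x = "(m, i)"]) auto
    with \<open>U \<in> F\<close> show "trunc N a \<in> U \<longleftrightarrow> a \<in> U" by (intro trunc_mem_iff assms(2))
  qed
qed

lemma cone_trunc: "cone (trunc N a) {i. a i < N} = {b. trunc N b = trunc N a}"
proof -
  have "(a i < N \<longrightarrow> b i = a i) \<and> (\<not> a i < N \<longrightarrow> N \<le> b i) \<longleftrightarrow> min (b i) N = min (a i) N"
    for b i by (auto simp: min_def)
  then show ?thesis by (auto simp: cone_def trunc_def fun_eq_iff)
qed

lemma finite_bounded_funs: "finite {c :: ('n::finite) expv. c \<le> B}"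
proof -
  have "{c :: 'n expv. c \<le> B} = PiE UNIV (\<lambda>i. {..B i})"
    by (auto simp: PiE_UNIV_domain le_fun_def)
  then show ?thesis by (simp add: finite_PiE)
qed

lemma cone_partition_if_trunc_invariant:
  fixes f :: "('n::finite) expv \<Rightarrow> 'b"
  assumes "\<And>a b. trunc N a = trunc N b \<Longrightarrow> f a = f b"
  shows "\<exists>F. finite F \<and> (\<forall>C\<in>F. \<exists>v S. C = cone v S) \<and> pairwise disjnt F \<and> \<Union>F = UNIV
            \<and> (\<forall>C\<in>F. \<forall>a\<in>C. \<forall>b\<in>C. f a = f b)"
proof (intro exI conjI)
  let ?F = "(\<lambda>t. {b :: 'n expv. trunc N b = t}) ` range (trunc N)"
  have "range (trunc N) \<subseteq> {t :: 'n expv. t \<le> (\<lambda>_. N)}"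
    by (auto simp: trunc_def le_fun_def)
  then have "finite (range (trunc N :: 'n expv \<Rightarrow> 'n expv))"
    by (rule finite_subset[OF _ finite_bounded_funs])
  then show "finite ?F" by (rule finite_imageI)
  show "\<forall>C\<in>?F. \<exists>v S. C = cone v S"
  proof
    fix C assume "C \<in> ?F"
    then obtain a where "C = {b. trunc N b = trunc N a}" by blast
    with cone_trunc[of N a] show "\<exists>v S. C = cone v S" by blast
  qed
  show "pairwise disjnt ?F"
  proof (rule pairwiseI)
    fix X Y assume "X \<in> ?F" "Y \<in> ?F" "X \<noteq> Y"
    then obtain s t where X: "X = {b. trunc N b = s}" and Y: "Y = {b. trunc N b = t}" by blast
    with \<open>X \<noteq> Y\<close> have "s \<noteq> t" by blast
    then show "disjnt X Y" unfolding X Y disjnt_def by blast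
  qed
  show "\<Union>?F = UNIV" by blast
  show "\<forall>C\<in>?F. \<forall>a\<in>C. \<forall>b\<in>C. f a = f b"
  proof (intro ballI)
    fix C a b assume "C \<in> ?F" "a \<in> C" "b \<in> C"
    then have "trunc N a = trunc N b" by auto
    then show "f a = f b" by (rule assms)
  qed
qed

lemma monomial_ideal_mgen: "monomial_ideal (mgen S)"
  by (auto simp: monomial_ideal_def mgen_def intro: order_trans)

lemma monomial_ideal_mpow: "monomial_ideal (mpow I l)"
  by (cases l) (auto simp: mprod_def monomial_ideal_mgen, simp add: monomial_ideal_def)

lemma mpow_Suc_add: "x \<in> mpow I l \<Longrightarrow> y \<in> I \<Longrightarrow> y + x \<in> mpow I (Suc l)"
  by (auto simp: mprod_def mgen_def plus_fun_def)

lemma monomial_ideal_if_add_xpow: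
  fixes S :: "('n::finite) expv set"
  assumes step: "\<And>a k. a \<in> S \<Longrightarrow> a + xpow k 1 \<in> S"
  shows "monomial_ideal S"
proof -
  have "a + e \<in> S" if "a \<in> S" for a e
  proof (induction "sum e UNIV" arbitrary: e)
    case 0
    then have "e = 0" by (simp add: fun_eq_iff)
    with \<open>a \<in> S\<close> show ?case by simp
  next
    case (Suc n)
    then obtain k where "0 < e k" by (metis gr0I sum.neutral nat.distinct(1))
    define e' where "e' = e(k := e k - 1)"
    have e: "e = e' + xpow k 1" using \<open>0 < e k\<close> by (auto simp: e'_def xpow_def fun_eq_iff)
    then have "sum e' UNIV = n" using Suc.hyps(2) by (simp add: sum.distrib xpow_def)
    then have "a + e' \<in> S" using Suc.hyps(1) by simp
    then have "(a + e') + xpow k 1 \<in> S" by (rule step)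
    then show ?case by (simp add: e add.assoc)
  qed
  moreover have "b = a + (b - a)" if "a \<le> b" for a b :: "'n expv"
    using that by (simp add: le_fun_def fun_eq_iff)
  ultimately show ?thesis unfolding monomial_ideal_def by metis
qed

lemma mingens_iff:
  assumes "monomial_ideal U"
  shows "m \<in> mingens U \<longleftrightarrow> m \<in> U \<and> (\<forall>i. xpow i 1 \<le> m \<longrightarrow> m - xpow i 1 \<notin> U)"
proof (intro iffI conjI allI impI)
  assume m: "m \<in> mingens U"
  then show "m \<in> U" by (simp add: mingens_def)
  fix i assume "xpow i 1 \<le> m"
  then have "m - xpow i 1 \<le> m" "m - xpow i 1 \<noteq> m"
    by (auto simp: le_fun_def fun_eq_iff xpow_def split: if_splits)
  with m show "m - xpow i 1 \<notin> U" by (auto simp: mingens_def)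
next
  assume m: "m \<in> U \<and> (\<forall>i. xpow i 1 \<le> m \<longrightarrow> m - xpow i 1 \<notin> U)"
  have "b = m" if "b \<in> U" "b \<le> m" for b
  proof (rule ccontr)
    assume "b \<noteq> m"
    with \<open>b \<le> m\<close> obtain i where "b i < m i" by (auto simp: le_fun_def fun_eq_iff intro: le_neq_implies_less)
    with \<open>b \<le> m\<close> have "xpow i 1 \<le> m" "b \<le> m - xpow i 1" by (auto simp: le_fun_def xpow_def)
    with that(1) m assms show False unfolding monomial_ideal_def by blast
  qed
  with m show "m \<in> mingens U" by (simp add: mingens_def)
qed

lemma xpow_dexp_mem:
  assumes "m_primary I"
  shows "xpow k (dexp I k) \<in> I"
proof -
  define d where "d = (LEAST d. xpow k d \<in> I)"
  have d: "xpow k d \<in> I" using assms LeastI_ex unfolding m_primary_def d_def by metis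
  have xpow_mono: "xpow k e \<le> xpow k e'" if "e \<le> e'" for e e'
    using that by (simp add: le_fun_def xpow_def)
  have "xpow k d \<in> mingens I"
  proof -
    have "b = xpow k d" if "b \<in> I" "b \<le> xpow k d" for b
    proof -
      have "b = xpow k (b k)" using \<open>b \<le> xpow k d\<close>
        by (auto simp: le_fun_def xpow_def fun_eq_iff split: if_splits)
      with \<open>b \<in> I\<close> have "d \<le> b k" unfolding d_def by (metis Least_le)
      with \<open>b \<le> xpow k d\<close> \<open>b = xpow k (b k)\<close> show ?thesis
        by (metis le_antisym le_funD xpow_def)
    qed
    with d show ?thesis by (simp add: mingens_def)
  qed
  moreover have "e = d" if "xpow k e \<in> mingens I" for e
  proof -
    have "d \<le> e" using that unfolding d_def mingens_def by (simp add: Least_le)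
    then have "xpow k d = xpow k e" using that d xpow_mono by (simp add: mingens_def)
    then show ?thesis by (metis xpow_def)
  qed
  ultimately have "dexp I k = d" unfolding dexp_def by (rule the_equality)
  with d show ?thesis by simp
qed

(* c + a * dexp I is the exponent vector of x^c mu^a, so index_ideal I c w is the set of indices a
   such that x^w divides x^c mu^a and x^c mu^a / x^w lies in I^(|a|+1). *)

definition index_ideal :: "('n::finite) expv set \<Rightarrow> 'n expv \<Rightarrow> 'n expv \<Rightarrow> 'n expv set" where
  "index_ideal I c w = {a. w \<le> c + a * dexp I \<and> c + a * dexp I - w \<in> mpow I (sum a UNIV + 1)}"

lemma monomial_ideal_index_ideal:
  assumes "m_primary I"
  shows "monomial_ideal (index_ideal I c w)"
proof (rule monomial_ideal_if_add_xpow)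
  fix a k assume a: "a \<in> index_ideal I c w"
  have lift: "c + (a + xpow k 1) * dexp I = xpow k (dexp I k) + (c + a * dexp I)"
    by (auto simp: fun_eq_iff xpow_def algebra_simps)
  have "sum (a + xpow k 1) UNIV = Suc (sum a UNIV)"
    by (simp add: sum.distrib xpow_def)
  moreover have "c + (a + xpow k 1) * dexp I - w = xpow k (dexp I k) + (c + a * dexp I - w)"
    using a unfolding lift index_ideal_def by (auto simp: fun_eq_iff le_fun_def)
  moreover have "w \<le> c + (a + xpow k 1) * dexp I"
    using a unfolding lift index_ideal_def by (auto simp: le_fun_def add_increasing)
  moreover have "xpow k (dexp I k) + (c + a * dexp I - w) \<in> mpow I (Suc (sum a UNIV + 1))"
    using a mpow_Suc_add[OF _ xpow_dexp_mem[OF assms]] by (simp add: index_ideal_def del: mpow.simps)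
  ultimately show "a + xpow k 1 \<in> index_ideal I c w"
    by (simp add: index_ideal_def del: mpow.simps)
qed

lemma I_idx_eq_mgen:
  "I_idx I a = mgen {c. c \<le> dexp I \<and> c + a * dexp I \<in> mingens (mpow I (sum a UNIV + 1))}"
proof -
  have "{\<lambda>i. m i - a i * dexp I i | m. m \<in> box I a \<inter> mingens (mpow I (sum a UNIV + 1))}
      = {c. c \<le> dexp I \<and> c + a * dexp I \<in> mingens (mpow I (sum a UNIV + 1))}"
  proof (intro set_eqI iffI)
    fix c assume "c \<in> {\<lambda>i. m i - a i * dexp I i | m. m \<in> box I a \<inter> mingens (mpow I (sum a UNIV + 1))}"
    then obtain m where "c = (\<lambda>i. m i - a i * dexp I i)" "m \<in> box I a" "m \<in> mingens (mpow I (sum a UNIV + 1))"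
      by blast
    moreover from this have "c \<le> dexp I" "c + a * dexp I = m"
      by (auto simp: box_def le_fun_def fun_eq_iff le_diff_conv)
    ultimately show "c \<in> {c. c \<le> dexp I \<and> c + a * dexp I \<in> mingens (mpow I (sum a UNIV + 1))}" by simp
  next
    fix c assume "c \<in> {c. c \<le> dexp I \<and> c + a * dexp I \<in> mingens (mpow I (sum a UNIV + 1))}"
    moreover from this have "c + a * dexp I \<in> box I a" "c = (\<lambda>i. (c + a * dexp I) i - a i * dexp I i)"
      by (auto simp: box_def le_fun_def)
    ultimately show "c \<in> {\<lambda>i. m i - a i * dexp I i | m. m \<in> box I a \<inter> mingens (mpow I (sum a UNIV + 1))}"
      by blast
  qed
  then show ?thesis by (simp add: I_idx_def)
qed

lemma mingens_mpow_iff_index_ideal: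
  "c + a * dexp I \<in> mingens (mpow I (sum a UNIV + 1)) \<longleftrightarrow>
     a \<in> index_ideal I c 0 \<and> (\<forall>i. a \<notin> index_ideal I c (xpow i 1))"
  by (auto simp: mingens_iff[OF monomial_ideal_mpow] index_ideal_def le_fun_def simp del: mpow.simps)

lemma I_idx_trunc_invariant:
  assumes "m_primary I"
  obtains N where "\<And>a b. trunc N a = trunc N b \<Longrightarrow> I_idx I a = I_idx I b"
proof -
  let ?W = "insert 0 (range (\<lambda>i. xpow i 1))"
  let ?F = "(\<lambda>(c, w). index_ideal I c w) ` ({c. c \<le> dexp I} \<times> ?W)"
  have finite_F: "finite ?F"
    by (intro finite_imageI finite_cartesian_product finite_bounded_funs) simp
  have ideals_F: "monomial_ideal U" if "U \<in> ?F" for U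
    using that monomial_ideal_index_ideal[OF assms] by auto
  obtain N where N: "\<And>U a. U \<in> ?F \<Longrightarrow> trunc N a \<in> U \<longleftrightarrow> a \<in> U"
    using monomial_ideals_common_trunc[OF finite_F ideals_F] by blast
  have "I_idx I a = I_idx I b" if ab: "trunc N a = trunc N b" for a b
  proof -
    have same: "a \<in> index_ideal I c w \<longleftrightarrow> b \<in> index_ideal I c w" if "c \<le> dexp I" "w \<in> ?W" for c w
    proof -
      have "index_ideal I c w \<in> ?F" using that by (auto intro!: image_eqI[where x = "(c, w)"])
      from N[OF this, of a] N[OF this, of b] ab show ?thesis by simp
    qed
    show ?thesis unfolding I_idx_eq_mgen mingens_mpow_iff_index_ideal
      by (rule arg_cong[where f = mgen], rule Collect_cong) (use same in blast)
  qed
  then show thesis by (rule that)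
qed

theorem mainTheorem8:
  fixes I :: "('n::finite) expv set"
  assumes "good_ideal I"
  shows "\<exists>F. finite F \<and> (\<forall>C\<in>F. \<exists>v S. C = cone v S) \<and> pairwise disjnt F \<and> \<Union>F = UNIV
            \<and> (\<forall>C\<in>F. \<forall>a\<in>C. \<forall>b\<in>C. I_idx I a = I_idx I b)"
proof -
  have "m_primary I" using assms by (simp add: good_ideal_def)
  then obtain N where "\<And>a b. trunc N a = trunc N b \<Longrightarrow> I_idx I a = I_idx I b"
    using I_idx_trunc_invariant by metis
  then show ?thesis by (rule cone_partition_if_trunc_invariant)
qed

end
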